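(* Let $X$ be a tropical hypersurface in $\mathbb{R}^n$, $n>3$, with dual subdivision $S_X$ of its Newton polytope $\Delta$. Let $\delta_1,\dots,\delta_k$ be all the $n$-dimensional polytopes of $S_X$ other than simplices, ordered in any way. Then $$rk(X)\le\#Vert(S_X)-1-\sum_{i=1}^{k}\Big(\#\Big(Vert(\delta_i)\setminus\bigcup_{j<i}Vert(\delta_j)\Big)-n+\dim\mathrm{ConvHull}\Big(Vert(\delta_i)\cap\bigcup_{j<i}Vert(\delta_j)\Big)\Big),$$ with the convention that the convex hull of the empty set has dimension $-1$.
   Context: A tropical hypersurface $X\subset\mathbb{R}^n$ is the corner locus of a tropical polynomial $N(x)=\max_{\omega\in\Delta\cap\mathbb{Z}^n}(\langle\omega,x\rangle+c_\omega)$, where $\Delta$ is its Newton polytope; $S_X$ is the dual subdivision (the regular subdivision of $\Delta$ induced by $\omega\mapsto c_\omega$), $Vert(S_X)$ its vertex set and $Vert(\delta)$ the vertex set of a cell $\delta$. The rank $rk(X)$ is the dimension of the space of tropical hypersurfaces with the same dual subdivision, i.e. of the set of vectors $(c_\omega)_{\omega\in Vert(S_X)}$, modulo adding a common constant, inducing exactly $S_X$. *)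

theory Defs
  imports "HOL-Analysis.Analysis" "HOL-Library.Function_Algebras"
begin

text \<open>A tropical polynomial in n variables is given by a finite nonempty support
  A of integer points of R^n (the monomials with finite coefficient) together with
  coefficients c.\<close>

definition lattice_points :: "(real^'n) set" where
  "lattice_points = {w. \<forall>i. w $ i \<in> \<int>}"

definition trop_eval :: "(real^'n) set \<Rightarrow> (real^'n \<Rightarrow> real) \<Rightarrow> real^'n \<Rightarrow> real" where
  "trop_eval A c x = Max ((\<lambda>w. w \<bullet> x + c w) ` A)"

definition trop_argmax :: "(real^'n) set \<Rightarrow> (real^'n \<Rightarrow> real) \<Rightarrow> real^'n \<Rightarrow> (real^'n) set" where
  "trop_argmax A c x = {w \<in> A. w \<bullet> x + c w = trop_eval A c x}"

definition trop_hypersurface :: "(real^'n) set \<Rightarrow> (real^'n \<Rightarrow> real) \<Rightarrow> (real^'n) set" where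
  "trop_hypersurface A c = {x. card (trop_argmax A c x) \<ge> 2}"

definition dual_cells :: "(real^'n) set \<Rightarrow> (real^'n \<Rightarrow> real) \<Rightarrow> (real^'n) set set" where
  "dual_cells A c = {convex hull (trop_argmax A c x) | x. True}"

definition subdiv_vertices :: "(real^'n) set \<Rightarrow> (real^'n \<Rightarrow> real) \<Rightarrow> (real^'n) set" where
  "subdiv_vertices A c = {w. {w} \<in> dual_cells A c}"

definition poly_vertices :: "(real^'n) set \<Rightarrow> (real^'n) set" where
  "poly_vertices P = {v. v extreme_point_of P}"

text \<open>Coefficient vectors (c'_w) indexed by Vert(S_X), encoded as functions vanishing
  outside Vert(S_X), which induce exactly the subdivision S_X.\<close>
definition same_subdiv_coeffs :: "(real^'n) set \<Rightarrow> (real^'n \<Rightarrow> real) \<Rightarrow> (real^'n \<Rightarrow> real) set" where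
  "same_subdiv_coeffs A c =
     {c'. (\<forall>w. w \<notin> subdiv_vertices A c \<longrightarrow> c' w = 0) \<and>
          dual_cells (subdiv_vertices A c) c' = dual_cells A c}"

definition fun_scale :: "real \<Rightarrow> ('a \<Rightarrow> real) \<Rightarrow> 'a \<Rightarrow> real" where
  "fun_scale r f = (\<lambda>x. r * f x)"

text \<open>Rank: the dimension of the set of such coefficient vectors (dimension of its
  affine hull, i.e. of the linear span of its differences), minus 1 for the
  quotient by adding a common constant.\<close>
definition trop_rank :: "(real^'n) set \<Rightarrow> (real^'n \<Rightarrow> real) \<Rightarrow> int" where
  "trop_rank A c =
     int (vector_space.dim fun_scale
            {f - g | f g. f \<in> same_subdiv_coeffs A c \<and> g \<in> same_subdiv_coeffs A c}) - 1"

end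

theory Submission
  imports Defs
begin

text \<open>The rank is one less than the dimension of the space \<open>D\<close> of differences of coefficient
  vectors inducing \<open>S_X\<close>. Such a difference vanishes off \<open>Vert(S_X)\<close> and, since every cell is
  where both tropical polynomials are maximal, it restricts to an affine function on the vertex
  set of each cell. Extend an affine basis of the vertices that \<open>\<delta>\<^sub>i\<close> shares with earlier cells
  to one of \<open>Vert(\<delta>\<^sub>i)\<close>; this adds at most \<open>n - dim ConvHull(\<dots>)\<close> new vertices. By induction on
  \<open>i\<close>, an element of \<open>D\<close> vanishing on all vertices except the new ones outside these bases
  vanishes on every cell, hence everywhere, so \<open>dim D\<close> is at most the number of those
  vertices. The argument works for any ordered list of full-dimensional cells.\<close>

interpretation fs: vector_space "fun_scale :: real \<Rightarrow> ('a \<Rightarrow> real) \<Rightarrow> _"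
  by unfold_locales (auto simp: fun_scale_def fun_eq_iff algebra_simps)

lemma sum_fun_apply: "finite K \<Longrightarrow> (\<Sum>k\<in>K. (f k :: 'a \<Rightarrow> real)) w = (\<Sum>k\<in>K. f k w)"
  by (induction K rule: finite_induct) auto

lemma fs_dim_le_card_determining_set:
  fixes W D :: "('a \<Rightarrow> real) set" and K :: "'a set"
  assumes "D \<subseteq> W" and "fs.subspace W" and "finite K"
    and determined: "\<And>g. g \<in> W \<Longrightarrow> (\<forall>k\<in>K. g k = 0) \<Longrightarrow> g = 0"
  shows "fs.dim D \<le> card K"
proof -
  obtain B where B: "B \<subseteq> fs.span D" "fs.independent B" "fs.span D \<subseteq> fs.span B"
      "card B = fs.dim (fs.span D)"
    using fs.basis_exists by blast
  have "fs.span B \<subseteq> W"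
    using B fs.span_minimal[OF assms(1,2)] by (metis fs.span_mono fs.span_span order_antisym)
  define r where "r g = (\<lambda>w. if w \<in> K then g w else 0)" for g :: "'a \<Rightarrow> real"
  have hom: "module_hom fun_scale fun_scale r"
    by unfold_locales (auto simp: r_def fun_scale_def fun_eq_iff algebra_simps)
  have inj: "inj_on r (fs.span B)"
  proof (rule inj_onI)
    fix x y assume xy: "x \<in> fs.span B" "y \<in> fs.span B" "r x = r y"
    have "x - y \<in> W"
      using xy \<open>fs.span B \<subseteq> W\<close> fs.subspace_diff[OF assms(2)] by blast
    moreover have "\<forall>k\<in>K. (x - y) k = 0"
      using xy(3) unfolding r_def fun_eq_iff by (metis diff_self minus_apply)
    ultimately show "x = y" using determined by force
  qed
  define e where "e k = (\<lambda>w. if w = k then 1 else 0 :: real)" for k :: 'a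
  have "r ` B \<subseteq> fs.span (e ` K)"
  proof
    fix g assume "g \<in> r ` B"
    then obtain h where g: "g = r h" by blast
    have "g = (\<Sum>k\<in>K. fun_scale (g k) (e k))"
      using assms(3)
      by (auto simp: fun_eq_iff sum_fun_apply fun_scale_def e_def g r_def if_distrib cong: if_cong)
    also have "\<dots> \<in> fs.span (e ` K)"
      by (intro fs.span_sum fs.span_scale fs.span_base) auto
    finally show "g \<in> fs.span (e ` K)" .
  qed
  then have "card (r ` B) \<le> card (e ` K)"
    using fs.independent_span_bound module_hom.independent_injective_image[OF hom B(2) inj]
      assms(3) by blast
  also have "\<dots> \<le> card K" using assms(3) card_image_le by blast
  finally show ?thesis
    using B(4) card_image[OF inj_on_subset[OF inj fs.span_superset]] by simp
qed

definition affine_on :: "'a::real_inner set \<Rightarrow> ('a \<Rightarrow> real) \<Rightarrow> bool" where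
  "affine_on S g \<longleftrightarrow> (\<exists>a b. \<forall>w\<in>S. g w = a \<bullet> w + b)"

lemma affine_on_add:
  assumes "affine_on S f" and "affine_on S g"
  shows "affine_on S (f + g)"
proof -
  obtain a b a' b' where "\<forall>w\<in>S. f w = a \<bullet> w + b" "\<forall>w\<in>S. g w = a' \<bullet> w + b'"
    using assms by (auto simp: affine_on_def)
  then show ?thesis
    unfolding affine_on_def by (intro exI[of _ "a + a'"] exI[of _ "b + b'"]) (simp add: inner_add_left)
qed

lemma affine_on_diff:
  assumes "affine_on S f" and "affine_on S g"
  shows "affine_on S (f - g)"
proof -
  obtain a b a' b' where "\<forall>w\<in>S. f w = a \<bullet> w + b" "\<forall>w\<in>S. g w = a' \<bullet> w + b'"
    using assms by (auto simp: affine_on_def)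
  then show ?thesis
    unfolding affine_on_def by (intro exI[of _ "a - a'"] exI[of _ "b - b'"]) (simp add: inner_diff_left)
qed

lemma affine_on_scale:
  assumes "affine_on S g"
  shows "affine_on S (fun_scale r g)"
proof -
  obtain a b where "\<forall>w\<in>S. g w = a \<bullet> w + b"
    using assms by (auto simp: affine_on_def)
  then show ?thesis
    unfolding affine_on_def fun_scale_def
    by (intro exI[of _ "r *\<^sub>R a"] exI[of _ "r * b"]) (simp add: algebra_simps)
qed

lemma affine_on_vanishing_on_spanning_subset:
  assumes "affine_on S g" and "T \<subseteq> S" and "affine hull T = affine hull S"
    and "\<And>t. t \<in> T \<Longrightarrow> g t = 0" and "w \<in> S"
  shows "g w = 0"
proof -
  obtain a b where ab: "\<And>w. w \<in> S \<Longrightarrow> g w = a \<bullet> w + b"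
    using assms(1) by (auto simp: affine_on_def)
  have "T \<subseteq> {y. a \<bullet> y = - b}"
    using assms(2,4) ab by force
  then have "affine hull S \<subseteq> {y. a \<bullet> y = - b}"
    using assms(3) hull_minimal affine_hyperplane by metis
  then show ?thesis
    using ab assms(5) hull_subset[of S affine] by force
qed

lemma spanning_subset_with_few_points_outside:
  fixes S U :: "'a::euclidean_space set"
  assumes "finite S"
  obtains T where "T \<subseteq> S" "affine hull T = affine hull S"
    "int (card (T - U)) \<le> aff_dim S - aff_dim (S \<inter> U)"
proof -
  obtain T0 where T0: "\<not> affine_dependent T0" "T0 \<subseteq> S \<inter> U" "affine hull T0 = affine hull (S \<inter> U)"
    using extend_to_affine_basis[of "{}" "S \<inter> U"] by auto
  obtain T where T: "\<not> affine_dependent T" "T0 \<subseteq> T" "T \<subseteq> S" "affine hull T = affine hull S"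
    using extend_to_affine_basis[of T0 S] T0 by auto
  have "finite T" using T(3) assms finite_subset by blast
  have "card (T - U) \<le> card (T - T0)"
    using T0(2) \<open>finite T\<close> by (intro card_mono) auto
  also have "\<dots> = card T - card T0"
    using T(2) \<open>finite T\<close> by (meson card_Diff_subset finite_subset)
  finally have "int (card (T - U)) \<le> int (card T) - int (card T0)"
    using card_mono[OF \<open>finite T\<close> T(2)] by linarith
  moreover have "int (card T) = aff_dim S + 1" "int (card T0) = aff_dim (S \<inter> U) + 1"
    using aff_dim_affine_independent T T0 aff_dim_affine_hull2 by metis+
  ultimately show ?thesis using that T by simp
qed

lemma affine_on_cells_vanishing:
  fixes P T :: "nat \<Rightarrow> 'a::euclidean_space set"
  assumes "\<And>i. i < m \<Longrightarrow> affine_on (P i) g"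
    and "\<And>i. i < m \<Longrightarrow> T i \<subseteq> P i \<and> affine hull (T i) = affine hull (P i)"
    and "\<And>i t. i < m \<Longrightarrow> t \<in> T i - (\<Union>j<i. P j) \<Longrightarrow> g t = 0"
  shows "i < m \<Longrightarrow> w \<in> P i \<Longrightarrow> g w = 0"
proof (induction i arbitrary: w rule: less_induct)
  case (less i)
  have "g t = 0" if "t \<in> T i" for t
    using assms(3)[OF less.prems(1)] less.IH less.prems(1) that by fastforce
  then show ?case
    using affine_on_vanishing_on_spanning_subset assms(1,2) less.prems by metis
qed

definition affine_on_cells :: "'a::real_inner set \<Rightarrow> (nat \<Rightarrow> 'a set) \<Rightarrow> nat \<Rightarrow> ('a \<Rightarrow> real) set"
  where "affine_on_cells V P m = {g. (\<forall>w. w \<notin> V \<longrightarrow> g w = 0) \<and> (\<forall>i<m. affine_on (P i) g)}"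

lemma subspace_affine_on_cells: "fs.subspace (affine_on_cells V P m)"
proof -
  have "affine_on S 0" for S :: "'a set"
    unfolding affine_on_def by (intro exI[of _ 0]) simp
  then show ?thesis
    unfolding fs.subspace_def affine_on_cells_def
    by (auto intro: affine_on_add affine_on_scale[unfolded fun_scale_def] simp: fun_scale_def)
qed

lemma affine_on_cells_determined:
  fixes P T :: "nat \<Rightarrow> 'a::euclidean_space set"
  assumes spans: "\<And>i. i < m \<Longrightarrow> T i \<subseteq> P i \<and> affine hull (T i) = affine hull (P i)"
    and g: "g \<in> affine_on_cells V P m"
    and zero: "\<And>w. w \<in> V - (\<Union>i<m. disjointed P i - T i) \<Longrightarrow> g w = 0"
  shows "g = 0"
proof -
  have "g t = 0" if "i < m" "t \<in> T i - (\<Union>j<i. P j)" for i t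
  proof -
    have "t \<in> disjointed P i"
      using that spans by (auto simp: disjointed_def atLeast0LessThan)
    then have "t \<notin> disjointed P j - T j" for j
      using disjoint_family_disjointed[of P] that(2)
      by (cases "i = j") (auto simp: disjoint_family_on_def)
    then show ?thesis
      using g zero by (cases "t \<in> V") (auto simp: affine_on_cells_def)
  qed
  then have cells: "g w = 0" if "i < m" "w \<in> P i" for i w
    using affine_on_cells_vanishing[of m P g T] spans g that
    unfolding affine_on_cells_def by blast
  show "g = 0"
  proof
    fix w
    consider "w \<notin> V" | "w \<in> V - (\<Union>i<m. disjointed P i - T i)" | i where "i < m" "w \<in> disjointed P i"
      by blast
    then show "g w = 0 w"
      using g zero by cases
        (auto simp: affine_on_cells_def intro: cells[OF _ disjointed_subset[THEN subsetD]])
  qed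
qed

lemma card_Diff_UN_disjoint:
  assumes "finite V" and "finite I" and "\<And>i. i \<in> I \<Longrightarrow> R i \<subseteq> V" and "disjoint_family_on R I"
  shows "int (card (V - (\<Union>i\<in>I. R i))) = int (card V) - (\<Sum>i\<in>I. int (card (R i)))"
proof -
  have "finite (R i)" if "i \<in> I" for i
    using assms(1,3) that finite_subset by blast
  then have "card (\<Union>i\<in>I. R i) = (\<Sum>i\<in>I. card (R i))"
    using assms(2,4) by (intro card_UN_disjoint) (auto simp: disjoint_family_on_def)
  moreover have "card (V - (\<Union>i\<in>I. R i)) = card V - card (\<Union>i\<in>I. R i)" "card (\<Union>i\<in>I. R i) \<le> card V"
    using assms(1,3) by (auto intro: card_Diff_subset card_mono finite_subset)
  ultimately show ?thesis by simp
qed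

lemma dim_affine_on_cells_le:
  fixes P :: "nat \<Rightarrow> 'a::euclidean_space set"
  assumes "finite V" and P_sub: "\<And>i. i < m \<Longrightarrow> P i \<subseteq> V" and "D \<subseteq> affine_on_cells V P m"
  shows "int (fs.dim D) \<le> int (card V)
    - (\<Sum>i<m. int (card (disjointed P i)) - aff_dim (P i) + aff_dim (P i \<inter> (\<Union>j<i. P j)))"
proof -
  define U where "U i = (\<Union>j<i. P j)" for i
  have "\<exists>T. T \<subseteq> P i \<and> affine hull T = affine hull (P i) \<and>
      int (card (T - U i)) \<le> aff_dim (P i) - aff_dim (P i \<inter> U i)" if "i < m" for i
    using spanning_subset_with_few_points_outside finite_subset[OF P_sub[OF that] \<open>finite V\<close>]
    by metis
  then obtain T where T: "\<And>i. i < m \<Longrightarrow> T i \<subseteq> P i \<and> affine hull (T i) = affine hull (P i) \<and>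
      int (card (T i - U i)) \<le> aff_dim (P i) - aff_dim (P i \<inter> U i)"
    by metis
  define R where "R i = disjointed P i - T i" for i
  have R_sub: "R i \<subseteq> V" if "i < m" for i
    using P_sub[OF that] disjointed_subset[of P i] by (auto simp: R_def)
  have "fs.dim D \<le> card (V - (\<Union>i<m. R i))"
  proof (rule fs_dim_le_card_determining_set[OF assms(3) subspace_affine_on_cells])
    fix g assume g: "g \<in> affine_on_cells V P m" "\<forall>k\<in>V - (\<Union>i<m. R i). g k = 0"
    show "g = 0"
    proof (rule affine_on_cells_determined[of m T P, OF _ g(1)])
      show "T i \<subseteq> P i \<and> affine hull (T i) = affine hull (P i)" if "i < m" for i
        using T[OF that] by blast
    qed (use g(2) in \<open>simp add: R_def\<close>)
  qed (use \<open>finite V\<close> in simp)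
  moreover have "int (card (V - (\<Union>i<m. R i))) = int (card V) - (\<Sum>i<m. int (card (R i)))"
    using disjoint_family_disjointed[of P] R_sub \<open>finite V\<close>
    by (intro card_Diff_UN_disjoint) (auto simp: R_def disjoint_family_on_def)
  moreover have "int (card (disjointed P i)) - aff_dim (P i) + aff_dim (P i \<inter> U i) \<le> int (card (R i))"
    if "i < m" for i
  proof -
    have "finite (disjointed P i)"
      using P_sub[OF that] disjointed_subset[of P i] \<open>finite V\<close> by (meson finite_subset subset_trans)
    moreover have "disjointed P i \<inter> T i = T i - U i"
      using T[OF that] by (auto simp: disjointed_def atLeast0LessThan U_def)
    ultimately have "card (disjointed P i) = card (T i - U i) + card (R i)"
      using card_Int_Diff[of "disjointed P i" "T i"] unfolding R_def by simp
    then show ?thesis using T[OF that] by linarith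
  qed
  then have "(\<Sum>i<m. int (card (disjointed P i)) - aff_dim (P i) + aff_dim (P i \<inter> U i))
      \<le> (\<Sum>i<m. int (card (R i)))"
    by (intro sum_mono) simp
  ultimately show ?thesis
    unfolding U_def by linarith
qed

lemma extreme_point_of_finite_convex_hull_exposed:
  fixes P :: "'a::euclidean_space set"
  assumes "finite P" and "w extreme_point_of convex hull P"
  obtains u where "\<And>p. p \<in> P - {w} \<Longrightarrow> u \<bullet> w < u \<bullet> p"
proof -
  have "convex (convex hull P - {w})"
    using assms(2) extreme_point_of_stillconvex[of "convex hull P" w] by auto
  then have "convex hull (P - {w}) \<subseteq> convex hull P - {w}"
    using hull_minimal[of "P - {w}" "convex hull P - {w}" convex] hull_subset[of P convex] by blast
  then have "w \<notin> convex hull (P - {w})" by blast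
  moreover have "closed (convex hull (P - {w}))"
    using assms(1) by (simp add: compact_imp_closed finite_imp_compact_convex_hull)
  ultimately obtain u b where "u \<bullet> w < b" "\<forall>y\<in>convex hull (P - {w}). u \<bullet> y > b"
    using separating_hyperplane_closed_point[OF convex_convex_hull] by metis
  then show ?thesis
    using that hull_subset[of "P - {w}" convex] by (meson less_trans subsetD)
qed

lemma trop_argmax_eq_singleton:
  assumes "finite A" "w \<in> A" "\<And>q. q \<in> A \<Longrightarrow> q \<noteq> w \<Longrightarrow> q \<bullet> x + c q < w \<bullet> x + c w"
  shows "trop_argmax A c x = {w}"
proof -
  have "trop_eval A c x = w \<bullet> x + c w"
    unfolding trop_eval_def using assms by (intro Max_eqI) (auto, metis less_le order_refl)
  then show ?thesis
    unfolding trop_argmax_def using assms by force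
qed

lemma small_perturbation_keeps_strict_bounds:
  fixes f g :: "'a \<Rightarrow> real"
  assumes "finite Q" and "\<And>q. q \<in> Q \<Longrightarrow> f q < M"
  obtains e where "0 < e" and "\<And>q. q \<in> Q \<Longrightarrow> f q + e * g q < M"
proof -
  have "\<forall>\<^sub>F e in at_right (0::real). f q + e * g q < M" if "q \<in> Q" for q
  proof -
    have "((\<lambda>e. f q + e * g q) \<longlongrightarrow> f q + 0 * g q) (at_right 0)"
      by (intro tendsto_intros)
    then show ?thesis
      using assms(2)[OF that] by (intro order_tendstoD(2)) auto
  qed
  then have "\<forall>\<^sub>F e in at_right (0::real). 0 < e \<and> (\<forall>q\<in>Q. f q + e * g q < M)"
    using \<open>finite Q\<close> by (intro eventually_conj eventually_at_right_less eventually_ball_finite) auto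
  then show ?thesis
    using that eventually_happens trivial_limit_at_right_real by blast
qed

lemma trop_argmax_shift_to_singleton:
  fixes A :: "(real^'n) set"
  assumes "finite A" and w: "w \<in> trop_argmax A c x"
    and u: "\<And>p. p \<in> trop_argmax A c x - {w} \<Longrightarrow> u \<bullet> w < u \<bullet> p"
  obtains e where "trop_argmax A c (x - e *\<^sub>R u) = {w}"
proof -
  define P where "P = trop_argmax A c x"
  define M where "M = trop_eval A c x"
  have P_val: "p \<bullet> x + c p = M" if "p \<in> P" for p
    using that by (simp add: P_def M_def trop_argmax_def)
  have below: "q \<bullet> x + c q < M" if "q \<in> A - P" for q
  proof -
    have "q \<bullet> x + c q \<le> M"
      unfolding M_def trop_eval_def using that \<open>finite A\<close> by (intro Max_ge) auto
    then show ?thesis using that by (auto simp: P_def M_def trop_argmax_def)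
  qed
  obtain e where e: "0 < e" "\<And>q. q \<in> A - P \<Longrightarrow> q \<bullet> x + c q + e * (u \<bullet> w - u \<bullet> q) < M"
    using small_perturbation_keeps_strict_bounds[of "A - P" "\<lambda>q. q \<bullet> x + c q" M
        "\<lambda>q. u \<bullet> w - u \<bullet> q"] below \<open>finite A\<close> by blast
  have shift: "q \<bullet> (x - e *\<^sub>R u) + c q = q \<bullet> x + c q - e * (u \<bullet> q)" for q
    by (simp add: inner_diff_right inner_commute)
  have "trop_argmax A c (x - e *\<^sub>R u) = {w}"
  proof (rule trop_argmax_eq_singleton[OF \<open>finite A\<close>])
    show "w \<in> A" using w by (simp add: trop_argmax_def)
    fix q assume "q \<in> A" "q \<noteq> w"
    show "q \<bullet> (x - e *\<^sub>R u) + c q < w \<bullet> (x - e *\<^sub>R u) + c w"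
    proof (cases "q \<in> P")
      case True
      then show ?thesis
        using u[of q] \<open>q \<noteq> w\<close> P_val w e(1) unfolding shift P_def
        by (simp add: mult_strict_left_mono)
    next
      case False
      then show ?thesis
        using e(2)[of q] \<open>q \<in> A\<close> P_val[of w] w unfolding shift P_def by (simp add: algebra_simps)
    qed
  qed
  then show ?thesis using that by blast
qed

lemma extreme_point_of_dual_cell_in_subdiv_vertices:
  fixes A :: "(real^'n) set"
  assumes "finite A" and "w extreme_point_of convex hull (trop_argmax A c x)"
  shows "w \<in> subdiv_vertices A c"
proof -
  have "finite (trop_argmax A c x)"
    using \<open>finite A\<close> by (simp add: trop_argmax_def)
  then obtain u where "\<And>p. p \<in> trop_argmax A c x - {w} \<Longrightarrow> u \<bullet> w < u \<bullet> p"
    using extreme_point_of_finite_convex_hull_exposed assms(2) by blast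
  moreover have "w \<in> trop_argmax A c x"
    using assms(2) extreme_point_of_convex_hull by blast
  ultimately obtain e where "trop_argmax A c (x - e *\<^sub>R u) = {w}"
    using trop_argmax_shift_to_singleton[OF \<open>finite A\<close>] by blast
  then have "{w} \<in> dual_cells A c"
    unfolding dual_cells_def by (metis (mono_tags, lifting) convex_hull_singleton mem_Collect_eq)
  then show ?thesis by (simp add: subdiv_vertices_def)
qed

lemma affine_on_vertices_of_dual_cell:
  assumes "\<delta> \<in> dual_cells V f"
  shows "affine_on (poly_vertices \<delta>) f"
proof -
  obtain x where \<delta>: "\<delta> = convex hull (trop_argmax V f x)"
    using assms by (auto simp: dual_cells_def)
  have "f w = (- x) \<bullet> w + trop_eval V f x" if "w \<in> poly_vertices \<delta>" for w
  proof -
    have "w \<in> trop_argmax V f x"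
      using that \<delta> extreme_point_of_convex_hull by (auto simp: poly_vertices_def)
    then show ?thesis by (auto simp: trop_argmax_def inner_commute)
  qed
  then show ?thesis unfolding affine_on_def by blast
qed

lemma subdiv_vertices_subset: "subdiv_vertices A c \<subseteq> A"
proof
  fix w assume "w \<in> subdiv_vertices A c"
  then obtain x where "{w} = convex hull (trop_argmax A c x)"
    by (auto simp: subdiv_vertices_def dual_cells_def)
  then have "trop_argmax A c x = {w}"
    by (metis convex_hull_eq_empty hull_subset subset_singletonD)
  then show "w \<in> A" by (auto simp: trop_argmax_def)
qed

lemma vertices_of_dual_cell:
  fixes A :: "(real^'n) set"
  assumes "finite A" and "\<delta> \<in> dual_cells A c"
  shows "poly_vertices \<delta> \<subseteq> subdiv_vertices A c" and "aff_dim (poly_vertices \<delta>) = aff_dim \<delta>"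
proof -
  obtain x where \<delta>: "\<delta> = convex hull (trop_argmax A c x)"
    using assms(2) by (auto simp: dual_cells_def)
  show "poly_vertices \<delta> \<subseteq> subdiv_vertices A c"
    using extreme_point_of_dual_cell_in_subdiv_vertices[OF assms(1)] \<delta>
    by (auto simp: poly_vertices_def)
  have "finite (trop_argmax A c x)"
    using assms(1) by (simp add: trop_argmax_def)
  then have "\<delta> = convex hull (poly_vertices \<delta>)"
    unfolding \<delta> poly_vertices_def
    by (metis Krein_Milman_Minkowski convex_convex_hull finite_imp_compact_convex_hull)
  then show "aff_dim (poly_vertices \<delta>) = aff_dim \<delta>"
    by (metis aff_dim_convex_hull)
qed

lemma diff_same_subdiv_coeffs_in_affine_on_cells:
  assumes "f \<in> same_subdiv_coeffs A c" and "g \<in> same_subdiv_coeffs A c"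
    and "\<And>i. i < m \<Longrightarrow> P i \<in> poly_vertices ` dual_cells A c"
  shows "f - g \<in> affine_on_cells (subdiv_vertices A c) P m"
proof -
  have "affine_on (P i) h" if i: "i < m" and h: "h \<in> same_subdiv_coeffs A c" for i h
  proof -
    obtain \<delta> where "\<delta> \<in> dual_cells A c" "P i = poly_vertices \<delta>"
      using assms(3)[OF i] by blast
    moreover have "dual_cells (subdiv_vertices A c) h = dual_cells A c"
      using h by (simp add: same_subdiv_coeffs_def)
    ultimately show ?thesis
      using affine_on_vertices_of_dual_cell by metis
  qed
  then show ?thesis
    using assms(1,2) unfolding affine_on_cells_def same_subdiv_coeffs_def
    by (auto intro: affine_on_diff)
qed

theorem mainTheorem8:
  fixes A :: "(real^'n) set" and c :: "real^'n \<Rightarrow> real"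
    and ds :: "(real^'n) set list"
  assumes "CARD('n) > 3"
    and "finite A" and "A \<noteq> {}" and "A \<subseteq> lattice_points"
    and "distinct ds"
    and "set ds = {\<delta> \<in> dual_cells A c. aff_dim \<delta> = int CARD('n) \<and> \<not> (int CARD('n) simplex \<delta>)}"
  shows "trop_rank A c \<le>
     int (card (subdiv_vertices A c)) - 1
     - (\<Sum>i<length ds.
          int (card (poly_vertices (ds ! i) - (\<Union>j<i. poly_vertices (ds ! j))))
          - int CARD('n)
          + aff_dim (convex hull (poly_vertices (ds ! i) \<inter> (\<Union>j<i. poly_vertices (ds ! j)))))"
proof -
  define V where "V = subdiv_vertices A c"
  define P where "P i = poly_vertices (ds ! i)" for i
  define D where "D = {f - g | f g. f \<in> same_subdiv_coeffs A c \<and> g \<in> same_subdiv_coeffs A c}"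
  have cell: "ds ! i \<in> dual_cells A c" "aff_dim (ds ! i) = int CARD('n)" if "i < length ds" for i
    using that assms(6) nth_mem[of i ds] by auto
  have "finite V"
    unfolding V_def using subdiv_vertices_subset assms(2) by (rule finite_subset)
  moreover have "P i \<subseteq> V" if "i < length ds" for i
    unfolding P_def V_def using vertices_of_dual_cell(1)[OF assms(2) cell(1)[OF that]] .
  moreover have "D \<subseteq> affine_on_cells V P (length ds)"
    using diff_same_subdiv_coeffs_in_affine_on_cells[where m="length ds" and P=P] cell(1)
    unfolding D_def V_def P_def by blast
  ultimately have "int (fs.dim D) \<le> int (card V)
      - (\<Sum>i<length ds. int (card (disjointed P i)) - aff_dim (P i) + aff_dim (P i \<inter> (\<Union>j<i. P j)))"
    by (rule dim_affine_on_cells_le)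
  moreover have "aff_dim (P i) = int CARD('n)" if "i \<in> {..<length ds}" for i
    using vertices_of_dual_cell(2)[OF assms(2) cell(1)] cell(2) that by (simp add: P_def)
  then have "(\<Sum>i<length ds. int (card (disjointed P i)) - aff_dim (P i) + aff_dim (P i \<inter> (\<Union>j<i. P j)))
      = (\<Sum>i<length ds. int (card (disjointed P i)) - int CARD('n) + aff_dim (P i \<inter> (\<Union>j<i. P j)))"
    by (intro sum.cong) simp_all
  ultimately show ?thesis
    unfolding trop_rank_def D_def[symmetric] V_def[symmetric] P_def[symmetric]
    by (simp add: disjointed_def atLeast0LessThan aff_dim_convex_hull)
qed

end
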